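(* Let $n\ge1$, $\mathbf{k}=(k_1,\dots,k_n)$ positive integers, $D\in\mathcal{D}_{\mathbf{k}}$ and $T=T(D)$. Then the Ranking Algorithm assigns every index of $T$ a rank; that is, for each $i=2,\dots,n$, when column $i$ is processed, the index $t_i-1$ (where $t_i$ is the top index of column $i$) has already been assigned a rank.
   Context: $|\mathbf{k}|=k_1+\cdots+k_n$, $N=n+|\mathbf{k}|$. $\mathcal{D}_{\mathbf{k}}$: sequences $(a_1,\dots,a_N)$ whose positive entries are $k_1,\dots,k_n$ in order, other entries $-1$, all partial sums $a_1+\cdots+a_{i-1}\ge0$. SW-word: $S^{k_j}$ for up step $k_j$, $W$ for $-1$. Filling Algorithm producing $T(D)$: $n$ columns, column $i$ with $k_i+1$ cells in rows $1,\dots,k_i+1$; place $1$ at top of column 1; having placed $1,\dots,i-1$, the lowest filled entry of column $j$ is active if not in row $k_j+1$; if the $i$-th letter is $W$ place $i$ below the smallest active entry, otherwise at the top of the leftmost empty column; continue until $1,\dots,N$ are placed. Entries of $T$ are called indices. Ranking Algorithm: assign ranks $0,1,\dots,k_1$ to the column-1 indices from top to bottom; for $i$ from $2$ to $n$, if the top index of column $i$ is $A+1$ and index $A$ has rank $a$, assign the indices of column $i$ ranks $a,a+1,\dots,a+k_i$ from top to bottom. *)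

theory Defs
  imports Main
begin

text \<open>Conventions: the composition k = (k_1,...,k_n) is a list of length n;
columns are 0-based in the list representation (column j+1 of the paper is
list position j); indices are 1..N as in the paper. A tableau is represented
as a list of n columns, each column being the list of its indices from top
to bottom.\<close>

definition Dk :: "nat list \<Rightarrow> int list set" where
  "Dk k = {D. length D = length k + sum_list k
            \<and> filter (\<lambda>x. x > 0) D = map int k
            \<and> (\<forall>x\<in>set D. x > 0 \<or> x = -1)
            \<and> (\<forall>m < length D. sum_list (take m D) \<ge> 0)}"

definition active_cols :: "nat list \<Rightarrow> nat list list \<Rightarrow> nat set" where
  "active_cols k cols = {j. j < length k \<and> cols ! j \<noteq> [] \<and> length (cols ! j) < k ! j + 1}"

text \<open>One step of the Filling Algorithm placing index i; the letter is S iff a > 0.\<close>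
definition fill_step :: "nat list \<Rightarrow> nat list list \<Rightarrow> nat \<times> int \<Rightarrow> nat list list" where
  "fill_step k cols ia = (case ia of (i, a) \<Rightarrow>
     (if a > 0 then
        (let j = (LEAST j. j < length k \<and> cols ! j = []) in cols[j := cols ! j @ [i]])
      else
        (let j = (SOME j. j \<in> active_cols k cols \<and>
                    (\<forall>j'\<in>active_cols k cols. last (cols ! j) \<le> last (cols ! j')))
         in cols[j := cols ! j @ [i]])))"

definition fillT :: "nat list \<Rightarrow> int list \<Rightarrow> nat list list" where
  "fillT k D = foldl (fill_step k) (replicate (length k) []) (zip [1..<length D + 1] D)"

end

theory Submission
  imports Defs
begin

(* After the first n letters of D, s of them S, have been processed, exactly the first s columns
   are started, column j holds at most k_j + 1 indices, together they hold exactly 1, ..., n, and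
   for every started column i > 1 the index (top of column i) - 1 lies in an earlier column.
   A letter S starts column s + 1 with top n + 1, and n already lies in an earlier column.
   A letter W needs an active column: the partial sum after it is still nonnegative, so
   n < k_1 + ... + k_s + s, the capacity of the started columns, and one of them is not full.
   At the end all columns are started; as ranks are assigned column by column from the left,
   index t_i - 1 then has a rank when column i is processed. *)

definition up_count :: "int list \<Rightarrow> nat" where
  "up_count xs = length (filter (\<lambda>x. x > 0) xs)"

lemma up_count_append: "up_count (xs @ ys) = up_count xs + up_count ys"
  by (simp add: up_count_def)

lemma up_count_snoc: "up_count (xs @ [a]) = (if a > 0 then Suc (up_count xs) else up_count xs)"
  by (simp add: up_count_def)

lemma filter_take_eq_take_filter:
  "filter P (take m xs) = take (length (filter P (take m xs))) (filter P xs)"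
proof -
  have "filter P xs = filter P (take m xs) @ filter P (drop m xs)"
    by (metis append_take_drop_id filter_append)
  then show ?thesis by (metis append_eq_conv_conj)
qed

lemma sum_list_plus_length_up_down:
  assumes "\<forall>x\<in>set xs. x > 0 \<or> x = (-1::int)"
  shows "sum_list xs + int (length xs) = sum_list (filter (\<lambda>x. x > 0) xs) + int (up_count xs)"
  using assms by (induction xs) (auto simp: up_count_def)

lemma sum_list_take_eq_sum_nth: "s \<le> length k \<Longrightarrow> sum_list (take s k) = (\<Sum>j<s. k ! j)"
  by (simp add: sum_list_sum_nth lessThan_atLeast0 min_absorb2)

lemma Dk_up_count:
  assumes "D \<in> Dk k"
  shows "up_count D = length k"
proof -
  have "filter (\<lambda>x. x > 0) D = map int k" using assms by (simp add: Dk_def)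
  then show ?thesis by (simp add: up_count_def)
qed

lemma Dk_filter_take:
  assumes "D \<in> Dk k"
  shows "filter (\<lambda>x. x > 0) (take m D) = map int (take (up_count (take m D)) k)"
    and "up_count (take m D) \<le> length k"
proof -
  have ups: "filter (\<lambda>x. x > 0) D = map int k" using assms by (simp add: Dk_def)
  have prefix: "filter (\<lambda>x. x > 0) (take m D) = take (up_count (take m D)) (filter (\<lambda>x. x > 0) D)"
    unfolding up_count_def by (rule filter_take_eq_take_filter)
  then show "filter (\<lambda>x. x > 0) (take m D) = map int (take (up_count (take m D)) k)"
    by (simp add: ups take_map)
  have "up_count D = up_count (take m D) + up_count (drop m D)"
    by (metis append_take_drop_id up_count_append)
  then show "up_count (take m D) \<le> length k"
    using Dk_up_count[OF assms] by simp
qed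

lemma Dk_sum_take:
  assumes "D \<in> Dk k" and "m \<le> length D"
  shows "sum_list (take m D) + int m
           = int (sum_list (take (up_count (take m D)) k)) + int (up_count (take m D))"
proof -
  have "\<forall>x\<in>set (take m D). x > 0 \<or> x = -1"
    using assms by (auto simp: Dk_def dest: in_set_takeD)
  from sum_list_plus_length_up_down[OF this] show ?thesis
    using assms(2) by (simp add: Dk_filter_take(1)[OF assms(1)] sum_list_of_nat)
qed

lemma Dk_sum_take_nonneg:
  assumes "D \<in> Dk k" and "m \<le> length D"
  shows "sum_list (take m D) \<ge> 0"
proof (cases "m < length D")
  case True
  then show ?thesis using assms(1) by (simp add: Dk_def)
next
  case False
  with Dk_sum_take[OF assms(1) order_refl] Dk_up_count[OF assms(1)] assms(1) show ?thesis
    by (simp add: Dk_def)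
qed

lemma Dk_W_below_capacity:
  assumes "D \<in> Dk k" and "m < length D" and "\<not> D ! m > 0"
  shows "m < sum_list (take (up_count (take m D)) k) + up_count (take m D)"
proof -
  have "D ! m = -1" using assms by (auto simp: Dk_def)
  moreover have "sum_list (take (Suc m) D) \<ge> 0"
    using Dk_sum_take_nonneg[OF assms(1)] assms(2) by simp
  ultimately have "sum_list (take m D) \<ge> 1"
    using assms(2) by (simp add: take_Suc_conv_app_nth)
  then show ?thesis using Dk_sum_take[OF assms(1) less_imp_le[OF assms(2)]] by simp
qed

lemma fillT_snoc: "fillT k (xs @ [a]) = fill_step k (fillT k xs) (Suc (length xs), a)"
proof -
  have "zip [1..<length (xs @ [a]) + 1] (xs @ [a]) = zip [1..<length xs + 1] xs @ [(Suc (length xs), a)]"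
    by (simp del: upt_Suc add: upt_Suc_append zip_append)
  then show ?thesis by (simp add: fillT_def del: upt_Suc)
qed

lemma fill_step_S:
  assumes "a > 0" and "s < length k" and "cols ! s = []" and "\<forall>j<s. cols ! j \<noteq> []"
  shows "fill_step k cols (i, a) = cols[s := [i]]"
proof -
  have "(LEAST j. j < length k \<and> cols ! j = []) = s"
    using assms(2-4) by (intro Least_equality) (auto simp: not_le[symmetric])
  then show ?thesis using assms(1,3) by (simp add: fill_step_def)
qed

lemma fill_step_W:
  assumes "\<not> a > 0" and "active_cols k cols \<noteq> {}"
  obtains j where "j \<in> active_cols k cols" and "fill_step k cols (i, a) = cols[j := cols ! j @ [i]]"
proof -
  let ?A = "active_cols k cols"
  let ?j = "SOME j. j \<in> ?A \<and> (\<forall>j'\<in>?A. last (cols ! j) \<le> last (cols ! j'))"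
  have "finite ?A" by (simp add: active_cols_def)
  then obtain j0 where "is_arg_min (\<lambda>j. last (cols ! j)) (\<lambda>j. j \<in> ?A) j0"
    using ex_is_arg_min_if_finite assms(2) by blast
  then have "\<exists>j. j \<in> ?A \<and> (\<forall>j'\<in>?A. last (cols ! j) \<le> last (cols ! j'))"
    by (auto simp: is_arg_min_linorder)
  then have "?j \<in> ?A"
    by (rule someI2_ex) blast
  moreover have "fill_step k cols (i, a) = cols[?j := cols ! ?j @ [i]]"
    using assms(1) by (simp add: fill_step_def Let_def)
  ultimately show ?thesis by (rule that)
qed

definition fill_invariant :: "nat list \<Rightarrow> nat \<Rightarrow> nat \<Rightarrow> nat list list \<Rightarrow> bool" where
  "fill_invariant k s n cols \<longleftrightarrow>
     s \<le> length k \<and> length cols = length k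
     \<and> (\<forall>j<length k. cols ! j \<noteq> [] \<longleftrightarrow> j < s)
     \<and> (\<forall>j<s. length (cols ! j) \<le> k ! j + 1)
     \<and> (\<Sum>j<s. length (cols ! j)) = n
     \<and> (\<forall>x\<in>{1..n}. \<exists>j<s. x \<in> set (cols ! j))
     \<and> (\<forall>i. 1 \<le> i \<and> i < s \<longrightarrow> (\<exists>j<i. hd (cols ! i) - 1 \<in> set (cols ! j)))"

lemma fill_invariant_init: "fill_invariant k 0 0 (replicate (length k) [])"
  by (simp add: fill_invariant_def)

lemma fill_invariant_S:
  assumes inv: "fill_invariant k s n cols" and "s < length k" and "a > 0"
  shows "fill_invariant k (Suc s) (Suc n) (fill_step k cols (Suc n, a))"
proof -
  from inv have len: "length cols = length k"
    and started: "\<forall>j<length k. cols ! j \<noteq> [] \<longleftrightarrow> j < s"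
    and bound: "\<forall>j<s. length (cols ! j) \<le> k ! j + 1"
    and total: "(\<Sum>j<s. length (cols ! j)) = n"
    and cover: "\<forall>x\<in>{1..n}. \<exists>j<s. x \<in> set (cols ! j)"
    and link: "\<forall>i. 1 \<le> i \<and> i < s \<longrightarrow> (\<exists>j<i. hd (cols ! i) - 1 \<in> set (cols ! j))"
    by (simp_all add: fill_invariant_def)
  define cols' where "cols' = cols[s := [Suc n]]"
  have len': "length cols' = length k"
    by (simp add: cols'_def len)
  have nth': "cols' ! j = (if j = s then [Suc n] else cols ! j)" for j
    using len assms(2) by (simp add: cols'_def)
  have step: "fill_step k cols (Suc n, a) = cols'"
    unfolding cols'_def using assms(2,3) started by (intro fill_step_S) auto
  have started': "\<forall>j<length k. cols' ! j \<noteq> [] \<longleftrightarrow> j < Suc s"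
    using started by (auto simp: nth')
  have bound': "\<forall>j<Suc s. length (cols' ! j) \<le> k ! j + 1"
    using bound by (auto simp: nth' less_Suc_eq)
  have total': "(\<Sum>j<Suc s. length (cols' ! j)) = Suc n"
  proof -
    have "(\<Sum>j<s. length (cols' ! j)) = (\<Sum>j<s. length (cols ! j))"
      by (intro sum.cong) (auto simp: nth')
    then show ?thesis using total by (simp add: nth')
  qed
  have cover': "\<forall>x\<in>{1..Suc n}. \<exists>j<Suc s. x \<in> set (cols' ! j)"
  proof
    fix x assume x: "x \<in> {1..Suc n}"
    show "\<exists>j<Suc s. x \<in> set (cols' ! j)"
    proof (cases "x = Suc n")
      case True
      then show ?thesis by (intro exI[of _ s]) (simp add: nth')
    next
      case False
      with x have "x \<in> {1..n}" by auto
      with cover obtain j where "j < s" "x \<in> set (cols ! j)" by blast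
      then show ?thesis by (intro exI[of _ j]) (simp add: nth')
    qed
  qed
  have link': "\<forall>i. 1 \<le> i \<and> i < Suc s \<longrightarrow> (\<exists>j<i. hd (cols' ! i) - 1 \<in> set (cols' ! j))"
  proof (intro allI impI)
    fix i assume i: "1 \<le> i \<and> i < Suc s"
    show "\<exists>j<i. hd (cols' ! i) - 1 \<in> set (cols' ! j)"
    proof (cases "i = s")
      case True
      have "n \<in> {1..n}"
      proof -
        have "0 < length k" using assms(2) by linarith
        then have "cols ! 0 \<noteq> []" using started[rule_format, of 0] i True by simp
        then have "1 \<le> length (cols ! 0)" by (simp add: Suc_le_eq)
        also have "\<dots> \<le> (\<Sum>j<s. length (cols ! j))"
          using i True by (intro member_le_sum) auto
        finally show ?thesis using total by simp
      qed
      with cover obtain j where j: "j < s" "n \<in> set (cols ! j)" by blast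
      show ?thesis
      proof (intro exI conjI)
        show "j < i" using j True by simp
        show "hd (cols' ! i) - 1 \<in> set (cols' ! j)" using j True by (simp add: nth')
      qed
    next
      case False
      obtain j where j: "j < i" "hd (cols ! i) - 1 \<in> set (cols ! j)" using link i False by auto
      show ?thesis
      proof (intro exI conjI)
        show "j < i" by (fact j(1))
        show "hd (cols' ! i) - 1 \<in> set (cols' ! j)" using j i False by (simp add: nth')
      qed
    qed
  qed
  show ?thesis
    unfolding fill_invariant_def step
    using assms(2) len' started' bound' total' cover' link' by simp
qed

lemma fill_invariant_active_cols:
  assumes inv: "fill_invariant k s n cols" and "n < sum_list (take s k) + s"
  shows "active_cols k cols \<noteq> {}"
proof -
  from inv have "s \<le> length k"
    and started: "\<forall>j<length k. cols ! j \<noteq> [] \<longleftrightarrow> j < s"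
    and bound: "\<forall>j<s. length (cols ! j) \<le> k ! j + 1"
    and total: "(\<Sum>j<s. length (cols ! j)) = n"
    by (simp_all add: fill_invariant_def)
  moreover have "(\<Sum>j<s. k ! j + 1) = (\<Sum>j<s. k ! j) + s"
    by (subst sum.distrib) simp
  ultimately have capacity: "n < (\<Sum>j<s. k ! j + 1)"
    using assms(2) by (simp only: sum_list_take_eq_sum_nth)
  obtain j where "j < s" "length (cols ! j) < k ! j + 1"
  proof (rule ccontr)
    assume "\<not> thesis"
    with that have "\<forall>j<s. k ! j + 1 \<le> length (cols ! j)" by (meson not_le)
    then have "(\<Sum>j<s. k ! j + 1) \<le> n" unfolding total[symmetric] by (intro sum_mono) auto
    with capacity show False by simp
  qed
  with \<open>s \<le> length k\<close> started have "j \<in> active_cols k cols"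
    by (simp add: active_cols_def)
  then show ?thesis by blast
qed

lemma fill_invariant_W:
  assumes inv: "fill_invariant k s n cols" and "n < sum_list (take s k) + s" and "\<not> a > 0"
  shows "fill_invariant k s (Suc n) (fill_step k cols (Suc n, a))"
proof -
  from inv have s_le: "s \<le> length k" and len: "length cols = length k"
    and started: "\<forall>j<length k. cols ! j \<noteq> [] \<longleftrightarrow> j < s"
    and bound: "\<forall>j<s. length (cols ! j) \<le> k ! j + 1"
    and total: "(\<Sum>j<s. length (cols ! j)) = n"
    and cover: "\<forall>x\<in>{1..n}. \<exists>j<s. x \<in> set (cols ! j)"
    and link: "\<forall>i. 1 \<le> i \<and> i < s \<longrightarrow> (\<exists>j<i. hd (cols ! i) - 1 \<in> set (cols ! j))"
    by (simp_all add: fill_invariant_def)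
  obtain j where j: "j \<in> active_cols k cols"
    and step: "fill_step k cols (Suc n, a) = cols[j := cols ! j @ [Suc n]]"
    using fill_step_W[OF assms(3) fill_invariant_active_cols[OF inv assms(2)]] by blast
  then have "j < s" and room: "length (cols ! j) < k ! j + 1"
    using started by (auto simp: active_cols_def)
  define cols' where "cols' = cols[j := cols ! j @ [Suc n]]"
  have len': "length cols' = length k"
    by (simp add: cols'_def len)
  have nth': "cols' ! i = (if i = j then cols ! j @ [Suc n] else cols ! i)" for i
    using len j by (simp add: cols'_def active_cols_def)
  have grow: "set (cols ! i) \<subseteq> set (cols' ! i)" for i
    by (auto simp: nth')
  have started': "\<forall>i<length k. cols' ! i \<noteq> [] \<longleftrightarrow> i < s"
    using started \<open>j < s\<close> by (auto simp: nth')
  have bound': "\<forall>i<s. length (cols' ! i) \<le> k ! i + 1"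
    using bound room by (auto simp: nth')
  have "(\<Sum>i<s. length (cols' ! i)) = (\<Sum>i<s. length (cols ! i) + (if i = j then 1 else 0))"
    by (intro sum.cong) (auto simp: nth')
  also have "\<dots> = Suc n"
    using total \<open>j < s\<close> by (simp add: sum.distrib)
  finally have total': "(\<Sum>i<s. length (cols' ! i)) = Suc n" .
  have cover': "\<forall>x\<in>{1..Suc n}. \<exists>i<s. x \<in> set (cols' ! i)"
  proof
    fix x assume x: "x \<in> {1..Suc n}"
    show "\<exists>i<s. x \<in> set (cols' ! i)"
    proof (cases "x = Suc n")
      case True
      then show ?thesis using \<open>j < s\<close> by (intro exI[of _ j]) (simp add: nth')
    next
      case False
      with x have "x \<in> {1..n}" by auto
      with cover obtain i where "i < s" "x \<in> set (cols ! i)" by blast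
      then show ?thesis using grow by blast
    qed
  qed
  have link': "\<forall>i. 1 \<le> i \<and> i < s \<longrightarrow> (\<exists>i'<i. hd (cols' ! i) - 1 \<in> set (cols' ! i'))"
  proof (intro allI impI)
    fix i assume i: "1 \<le> i \<and> i < s"
    then obtain i' where "i' < i" "hd (cols ! i) - 1 \<in> set (cols ! i')"
      using link by blast
    moreover have "cols ! i \<noteq> []"
      using started i s_le by simp
    then have "hd (cols' ! i) = hd (cols ! i)"
      by (auto simp: nth')
    ultimately show "\<exists>i'<i. hd (cols' ! i) - 1 \<in> set (cols' ! i')"
      using grow by (metis subsetD)
  qed
  show ?thesis
    unfolding fill_invariant_def step cols'_def[symmetric]
    using s_le len' started' bound' total' cover' link' by simp
qed

lemma fill_invariant_fillT_take:
  assumes "D \<in> Dk k" and "m \<le> length D"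
  shows "fill_invariant k (up_count (take m D)) m (fillT k (take m D))"
  using assms(2)
proof (induction m)
  case 0
  show ?case using fill_invariant_init by (simp add: fillT_def up_count_def)
next
  case (Suc m)
  then have m: "m < length D" by simp
  have IH: "fill_invariant k (up_count (take m D)) m (fillT k (take m D))"
    using Suc by simp
  have take_Suc: "take (Suc m) D = take m D @ [D ! m]"
    using m by (simp add: take_Suc_conv_app_nth)
  have fill: "fillT k (take (Suc m) D) = fill_step k (fillT k (take m D)) (Suc m, D ! m)"
    using m by (simp add: take_Suc fillT_snoc)
  have ups: "up_count (take (Suc m) D)
               = (if D ! m > 0 then Suc (up_count (take m D)) else up_count (take m D))"
    by (simp add: take_Suc up_count_snoc)
  show ?case
  proof (cases "D ! m > 0")
    case True
    have "up_count (take m D) < length k"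
      using Dk_filter_take(2)[OF assms(1), of "Suc m"] True by (simp add: ups)
    from fill_invariant_S[OF IH this True] show ?thesis
      unfolding fill ups using True by simp
  next
    case False
    from fill_invariant_W[OF IH Dk_W_below_capacity[OF assms(1) m False] False] show ?thesis
      unfolding fill ups using False by simp
  qed
qed

theorem mainTheorem5:
  fixes k :: "nat list" and D :: "int list"
  assumes "length k \<ge> 1"
    and "\<forall>x\<in>set k. x > 0"
    and "D \<in> Dk k"
  shows "\<forall>i. 1 \<le> i \<and> i < length k \<longrightarrow>
           fillT k D ! i \<noteq> [] \<and>
           (\<exists>j<i. hd (fillT k D ! i) - 1 \<in> set (fillT k D ! j))"
proof -
  have "fill_invariant k (length k) (length D) (fillT k D)"
    using fill_invariant_fillT_take[OF assms(3) order_refl] Dk_up_count[OF assms(3)] by simp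
  then show ?thesis by (simp add: fill_invariant_def)
qed

end
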